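(* Let $\mathcal R$ be a set of existential rules in which every rule body has at most $b$ atoms, let $\mathrm{X}\in\{\mathbf{O},\mathbf{SO},\mathbf{R},\mathbf{E}\}$, and let $\mathcal D$ be an $\mathrm{X}$-chase derivation from a factbase $F$ and $\mathcal R$. Then for any atom $A$ of rank $k$ in $\mathcal D$, $|F\cap \mathit{Anc}(A,\mathcal D)|\le b^k$; and for any trigger $(R,\pi)$ of rank $k$ in $\mathcal D$, $|F\cap \mathit{Anc}((R,\pi),\mathcal D)|\le b^k$.
   Context: First-order setting with constants and variables but no function symbols; a factbase is a set of atoms; a homomorphism from a set of atoms $A$ to $B$ is a substitution $\pi$ of variables of $A$ by terms of $B$ with $\pi(A)\subseteq B$. An existential rule $R=(B,H)$ is $\forall\bar x\forall\bar y(B(\bar x,\bar y)\to\exists\bar z\,H(\bar x,\bar z))$, frontier $\bar x$. A trigger $(R,\pi)$ on $F$ has $\pi:B\to F$ a homomorphism; $\pi^s$ extends $\pi$ by mapping each existential variable $z$ to a fresh variable $z_{(R,\pi)}$; $F\cup\pi^s(H)$ is the immediate derivation. A derivation from $F$ and $\mathcal R$ is a sequence $D_0=(\emptyset,\emptyset,F)$, $D_i=(R_i,\pi_i,F_i)$ with $F_i$ the immediate derivation from $F_{i-1}$ through $(R_i,\pi_i)$ and pairwise distinct triggers. Applicability (for a derivation with last factbase $F_n$ and $R=(B,H)$): $\mathbf{O}$: $\pi:B\to F_n$ homomorphism; $\mathbf{SO}$: additionally no earlier trigger $(R,\pi')$ with $\pi'$ equal to $\pi$ on the frontier; $\mathbf{R}$: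 $\pi$ does not extend to a homomorphism $B\cup H\to F_n$; $\mathbf{E}$: $F_n\not\equiv F_n\cup\pi^s(H)$. An $\mathrm{X}$-chase derivation is a derivation in which each trigger is $\mathrm{X}$-applicable on its prefix (for $\mathbf{E}$, additionally $\mathbf{E}$-breadth-first, i.e. triggers in non-decreasing rank and each rank completed before the next). Rank: atoms of $F$ have rank 0; another atom $A$ has rank $1+\max_{A'\in\pi(B)}\mathrm{rank}(A')$ where $(R,\pi)$ is the first trigger with $A\in\pi^s(H)$; a trigger $(R,\pi)$ has rank $1+\max_{A'\in\pi(B)}\mathrm{rank}(A')$. Ancestors: for $D_i=(R_i,\pi_i,F_i)$, every atom of $\pi_i(B_i)$ is a direct ancestor of every atom of $F_i\setminus F_{i-1}$; the ancestor relation is the transitive closure. For $j<i$, $(R_j,\pi_j)$ is a direct ancestor of $(R_i,\pi_i)$ if some atom of $F_j\setminus F_{j-1}$ is a direct ancestor of the atoms of $F_i\setminus F_{i-1}$, extended transitively. $\mathit{Anc}(A,\mathcal D)$ and $\mathit{Anc}((R,\pi),\mathcal D)$ denote the sets of (atom) ancestors of an atom and of a trigger. *)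

theory Defs
  imports Main
begin

datatype ('c, 'v) trm = Const 'c | Var 'v

type_synonym ('p, 'c, 'v) atom = "'p \<times> ('c, 'v) trm list"

text \<open>Variables occurring in factbases: original variables of the initial
  factbase (V) and fresh variables created by the chase.  The fresh variable
  for existential variable z created at step i is N i z; since the triggers of a
  derivation are pairwise distinct, this is just a renaming of z_(R,pi).\<close>
datatype ('v, 'x) fvar = V 'v | N nat 'x

fun vars_trm :: "('c, 'v) trm \<Rightarrow> 'v set" where
  "vars_trm (Const c) = {}"
| "vars_trm (Var v) = {v}"

definition vars_atoms :: "('p, 'c, 'v) atom set \<Rightarrow> 'v set" where
  "vars_atoms A = (\<Union>a\<in>A. \<Union>t\<in>set (snd a). vars_trm t)"

fun subst_trm :: "('a \<Rightarrow> ('c, 'b) trm) \<Rightarrow> ('c, 'a) trm \<Rightarrow> ('c, 'b) trm" where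
  "subst_trm \<sigma> (Const c) = Const c"
| "subst_trm \<sigma> (Var v) = \<sigma> v"

definition subst_atom :: "('a \<Rightarrow> ('c, 'b) trm) \<Rightarrow> ('p, 'c, 'a) atom \<Rightarrow> ('p, 'c, 'b) atom" where
  "subst_atom \<sigma> a = (fst a, map (subst_trm \<sigma>) (snd a))"

definition subst_atoms :: "('a \<Rightarrow> ('c, 'b) trm) \<Rightarrow> ('p, 'c, 'a) atom set \<Rightarrow> ('p, 'c, 'b) atom set" where
  "subst_atoms \<sigma> A = subst_atom \<sigma> ` A"

definition is_hom :: "('a \<Rightarrow> ('c, 'b) trm) \<Rightarrow> ('p, 'c, 'a) atom set \<Rightarrow> ('p, 'c, 'b) atom set \<Rightarrow> bool" where
  "is_hom \<sigma> A B \<longleftrightarrow> subst_atoms \<sigma> A \<subseteq> B"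

definition fb_equiv :: "('p, 'c, 'v) atom set \<Rightarrow> ('p, 'c, 'v) atom set \<Rightarrow> bool" where
  "fb_equiv F G \<longleftrightarrow> (\<exists>\<sigma>. is_hom \<sigma> F G) \<and> (\<exists>\<sigma>. is_hom \<sigma> G F)"

type_synonym ('p, 'c, 'x) rule = "('p, 'c, 'x) atom set \<times> ('p, 'c, 'x) atom set"

abbreviation body :: "('p, 'c, 'x) rule \<Rightarrow> ('p, 'c, 'x) atom set" where "body R \<equiv> fst R"
abbreviation head :: "('p, 'c, 'x) rule \<Rightarrow> ('p, 'c, 'x) atom set" where "head R \<equiv> snd R"

definition frontier :: "('p, 'c, 'x) rule \<Rightarrow> 'x set" where
  "frontier R = vars_atoms (body R) \<inter> vars_atoms (head R)"

definition wf_rule :: "('p, 'c, 'x) rule \<Rightarrow> bool" where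
  "wf_rule R \<longleftrightarrow> finite (body R) \<and> finite (head R)"

type_synonym ('p, 'c, 'v, 'x) fatom = "('p, 'c, ('v, 'x) fvar) atom"
type_synonym ('c, 'v, 'x) hsubst = "'x \<Rightarrow> ('c, ('v, 'x) fvar) trm"
type_synonym ('p, 'c, 'v, 'x) trigger = "('p, 'c, 'x) rule \<times> ('c, 'v, 'x) hsubst"

text \<open>pi^s for a trigger applied at step i (steps numbered from 1):
  existential variables are mapped to fresh variables N i z.\<close>
definition safe_ext :: "nat \<Rightarrow> ('p, 'c, 'v, 'x) trigger \<Rightarrow> ('c, 'v, 'x) hsubst" where
  "safe_ext i t = (\<lambda>z. if z \<in> vars_atoms (body (fst t)) then snd t z else Var (N i z))"

definition trig_output :: "nat \<Rightarrow> ('p, 'c, 'v, 'x) trigger \<Rightarrow> ('p, 'c, 'v, 'x) fatom set" where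
  "trig_output i t = subst_atoms (safe_ext i t) (head (fst t))"

definition body_img :: "('p, 'c, 'v, 'x) trigger \<Rightarrow> ('p, 'c, 'v, 'x) fatom set" where
  "body_img t = subst_atoms (snd t) (body (fst t))"

definition same_trigger :: "('p, 'c, 'v, 'x) trigger \<Rightarrow> ('p, 'c, 'v, 'x) trigger \<Rightarrow> bool" where
  "same_trigger t t' \<longleftrightarrow> fst t = fst t' \<and> (\<forall>x\<in>vars_atoms (body (fst t)). snd t x = snd t' x)"

text \<open>A (finite) derivation is given by the initial factbase F and the list ts
  of its triggers; ts ! j is the trigger of step j+1 (0-based index j).
  fbs F ts j is the factbase F_j (after the first j steps).\<close>
fun fbs :: "('p, 'c, 'v, 'x) fatom set \<Rightarrow> ('p, 'c, 'v, 'x) trigger list \<Rightarrow> nat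
            \<Rightarrow> ('p, 'c, 'v, 'x) fatom set" where
  "fbs F ts 0 = F"
| "fbs F ts (Suc j) = fbs F ts j \<union> trig_output (Suc j) (ts ! j)"

definition init_fb :: "('p, 'c, 'v, 'x) fatom set \<Rightarrow> bool" where
  "init_fb F \<longleftrightarrow> (\<forall>a\<in>F. \<forall>t\<in>set (snd a). \<forall>w\<in>vars_trm t. \<exists>v. w = V v)"

definition derivation :: "('p, 'c, 'x) rule set \<Rightarrow> ('p, 'c, 'v, 'x) fatom set
    \<Rightarrow> ('p, 'c, 'v, 'x) trigger list \<Rightarrow> bool" where
  "derivation Rs F ts \<longleftrightarrow> init_fb F
     \<and> (\<forall>j < length ts. fst (ts ! j) \<in> Rs \<and> is_hom (snd (ts ! j)) (body (fst (ts ! j))) (fbs F ts j))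
     \<and> (\<forall>j k. j < k \<and> k < length ts \<longrightarrow> \<not> same_trigger (ts ! j) (ts ! k))"

text \<open>arank F ts j A: rank of atom A in the prefix of length j (0 for atoms of F,
  otherwise the rank of the first trigger producing A).  Empty maxima are 0.\<close>
fun arank :: "('p, 'c, 'v, 'x) fatom set \<Rightarrow> ('p, 'c, 'v, 'x) trigger list \<Rightarrow> nat
              \<Rightarrow> ('p, 'c, 'v, 'x) fatom \<Rightarrow> nat" where
  "arank F ts 0 A = 0"
| "arank F ts (Suc j) A =
     (if A \<in> fbs F ts j then arank F ts j A
      else if A \<in> trig_output (Suc j) (ts ! j)
        then Suc (Max (insert 0 (arank F ts j ` body_img (ts ! j))))
      else 0)"

definition trank :: "('p, 'c, 'v, 'x) fatom set \<Rightarrow> ('p, 'c, 'v, 'x) trigger list \<Rightarrow> nat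
              \<Rightarrow> ('p, 'c, 'v, 'x) trigger \<Rightarrow> nat" where
  "trank F ts j t = Suc (Max (insert 0 (arank F ts j ` body_img t)))"

datatype chase_kind = Oblivious | SemiOblivious | Restricted | Equivalent

definition applicable :: "chase_kind \<Rightarrow> ('p, 'c, 'v, 'x) fatom set \<Rightarrow> ('p, 'c, 'v, 'x) trigger list
    \<Rightarrow> nat \<Rightarrow> ('p, 'c, 'v, 'x) trigger \<Rightarrow> bool" where
  "applicable X F ts j t \<longleftrightarrow>
     is_hom (snd t) (body (fst t)) (fbs F ts j) \<and>
     (case X of
        Oblivious \<Rightarrow> True
      | SemiOblivious \<Rightarrow> \<not> (\<exists>k < j. fst (ts ! k) = fst t \<and>
                               (\<forall>x\<in>frontier (fst t). snd (ts ! k) x = snd t x))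
      | Restricted \<Rightarrow> \<not> (\<exists>\<sigma>. (\<forall>x\<in>vars_atoms (body (fst t)). \<sigma> x = snd t x) \<and>
                            is_hom \<sigma> (body (fst t) \<union> head (fst t)) (fbs F ts j))
      | Equivalent \<Rightarrow> \<not> fb_equiv (fbs F ts j) (fbs F ts j \<union> trig_output (Suc j) t))"

definition breadth_first :: "('p, 'c, 'x) rule set \<Rightarrow> ('p, 'c, 'v, 'x) fatom set
    \<Rightarrow> ('p, 'c, 'v, 'x) trigger list \<Rightarrow> bool" where
  "breadth_first Rs F ts \<longleftrightarrow>
     (\<forall>j k. j < k \<and> k < length ts \<longrightarrow> trank F ts j (ts ! j) \<le> trank F ts k (ts ! k))
   \<and> (\<forall>j < length ts. \<forall>t. fst t \<in> Rs \<and> applicable Equivalent F ts j t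
          \<longrightarrow> \<not> trank F ts j t < trank F ts j (ts ! j))"

definition chase_derivation :: "chase_kind \<Rightarrow> ('p, 'c, 'x) rule set \<Rightarrow> ('p, 'c, 'v, 'x) fatom set
    \<Rightarrow> ('p, 'c, 'v, 'x) trigger list \<Rightarrow> bool" where
  "chase_derivation X Rs F ts \<longleftrightarrow> derivation Rs F ts
     \<and> (\<forall>j < length ts. applicable X F ts j (ts ! j))
     \<and> (X = Equivalent \<longrightarrow> breadth_first Rs F ts)"

definition direct_anc :: "('p, 'c, 'v, 'x) fatom set \<Rightarrow> ('p, 'c, 'v, 'x) trigger list
    \<Rightarrow> (('p, 'c, 'v, 'x) fatom \<times> ('p, 'c, 'v, 'x) fatom) set" where
  "direct_anc F ts = {(A', A). \<exists>j < length ts. A' \<in> body_img (ts ! j) \<and>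
                        A \<in> fbs F ts (Suc j) - fbs F ts j}"

definition Anc :: "('p, 'c, 'v, 'x) fatom set \<Rightarrow> ('p, 'c, 'v, 'x) trigger list
    \<Rightarrow> ('p, 'c, 'v, 'x) fatom \<Rightarrow> ('p, 'c, 'v, 'x) fatom set" where
  "Anc F ts A = {A'. (A', A) \<in> (direct_anc F ts)\<^sup>+}"

definition trigger_Anc :: "('p, 'c, 'v, 'x) fatom set \<Rightarrow> ('p, 'c, 'v, 'x) trigger list
    \<Rightarrow> nat \<Rightarrow> ('p, 'c, 'v, 'x) fatom set" where
  "trigger_Anc F ts j = body_img (ts ! j) \<union> (\<Union>A\<in>body_img (ts ! j). Anc F ts A)"

end

theory Submission
  imports Defs
begin

text \<open>An atom created
  at step j has as ancestors exactly the atoms of the body image of the trigger of step j and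
  their ancestors.  That body image has at most b atoms, each of rank smaller than the new atom,
  so by induction along the derivation each of them has at most b^(k-1) initial atoms among
  itself and its ancestors, and the new atom at most b * b^(k-1).\<close>

lemma card_UN_le_power_Suc_Max:
  fixes A :: "'a \<Rightarrow> 'b set" and r :: "'a \<Rightarrow> nat"
  assumes I: "finite I" "card I \<le> b"
    and A: "\<And>i. i \<in> I \<Longrightarrow> card (A i) \<le> b ^ r i"
  shows "card (\<Union>i\<in>I. A i) \<le> b ^ Suc (Max (insert 0 (r ` I)))"
proof -
  let ?M = "Max (insert 0 (r ` I))"
  have A_le: "card (A i) \<le> b ^ ?M" if i: "i \<in> I" for i
  proof -
    have "0 < card I" using I(1) i by (auto simp: card_gt_0_iff)
    then have "0 < b" using I(2) by simp
    moreover have "r i \<le> ?M" using I(1) i by (intro Max_ge) auto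
    ultimately have "b ^ r i \<le> b ^ ?M" by (simp add: power_increasing)
    with A[OF i] show ?thesis by (rule order_trans)
  qed
  have "card (\<Union>i\<in>I. A i) \<le> (\<Sum>i\<in>I. card (A i))" by (rule card_UN_le[OF I(1)])
  also have "\<dots> \<le> (\<Sum>i\<in>I. b ^ ?M)" using A_le by (rule sum_mono)
  also have "\<dots> = card I * b ^ ?M" by simp
  also have "\<dots> \<le> b * b ^ ?M" using I(2) by simp
  finally show ?thesis by simp
qed

lemma fbs_mono: "i \<le> k \<Longrightarrow> fbs F ts i \<subseteq> fbs F ts k"
  by (induction k) (auto simp: le_Suc_eq)

lemma subset_fbs: "F \<subseteq> fbs F ts k"
  using fbs_mono[of 0 k] by simp

lemma new_atom_step_unique:
  assumes "A \<in> fbs F ts (Suc j) - fbs F ts j" "A \<in> fbs F ts (Suc j') - fbs F ts j'"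
  shows "j = j'"
proof (rule ccontr)
  assume "j \<noteq> j'"
  then have "Suc j \<le> j' \<or> Suc j' \<le> j" by auto
  then show False using assms fbs_mono[of "Suc j" j' F ts] fbs_mono[of "Suc j'" j F ts] by auto
qed

lemma arank_new_atom:
  assumes "A \<in> fbs F ts (Suc j) - fbs F ts j"
  shows "arank F ts (Suc j) A = trank F ts j (ts ! j)"
  using assms by (auto simp: trank_def)

lemma finite_body_img: "wf_rule (fst t) \<Longrightarrow> finite (body_img t)"
  by (simp add: wf_rule_def body_img_def subst_atoms_def)

lemma card_body_img_le: "wf_rule (fst t) \<Longrightarrow> card (body_img t) \<le> card (body (fst t))"
  by (simp add: wf_rule_def body_img_def subst_atoms_def card_image_le)

lemma derivation_body_img_subset:
  "derivation Rs F ts \<Longrightarrow> j < length ts \<Longrightarrow> body_img (ts ! j) \<subseteq> fbs F ts j"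
  by (simp add: derivation_def is_hom_def body_img_def)

lemma derivation_rule_in:
  "derivation Rs F ts \<Longrightarrow> j < length ts \<Longrightarrow> fst (ts ! j) \<in> Rs"
  by (simp add: derivation_def)

lemma Anc_subset_body_imgs: "Anc F ts A \<subseteq> (\<Union>j<length ts. body_img (ts ! j))"
proof
  fix A' assume "A' \<in> Anc F ts A"
  then have "(A', A) \<in> (direct_anc F ts)\<^sup>+" unfolding Anc_def by simp
  then obtain A'' where "(A', A'') \<in> direct_anc F ts" by (metis tranclD)
  then show "A' \<in> (\<Union>j<length ts. body_img (ts ! j))"
    unfolding direct_anc_def by auto
qed

lemma Anc_initial:
  assumes "A \<in> F" shows "Anc F ts A = {}"
proof -
  have no_parent: "(A', A) \<notin> direct_anc F ts" for A'
    using assms subset_fbs unfolding direct_anc_def by blast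
  have "(A', A) \<notin> (direct_anc F ts)\<^sup>+" for A'
    by (metis no_parent tranclE)
  then show ?thesis unfolding Anc_def by simp
qed

lemma Anc_new_atom_subset:
  assumes "A \<in> fbs F ts (Suc j) - fbs F ts j"
  shows "Anc F ts A \<subseteq> trigger_Anc F ts j"
proof
  fix A' assume "A' \<in> Anc F ts A"
  then have "(A', A) \<in> (direct_anc F ts)\<^sup>+" unfolding Anc_def by simp
  then show "A' \<in> trigger_Anc F ts j"
  proof (cases rule: tranclE)
    case base
    then obtain j' where "A' \<in> body_img (ts ! j')" "A \<in> fbs F ts (Suc j') - fbs F ts j'"
      unfolding direct_anc_def by blast
    with new_atom_step_unique[OF assms] show ?thesis unfolding trigger_Anc_def by simp
  next
    case (step A'')
    then obtain j' where "A'' \<in> body_img (ts ! j')" "A \<in> fbs F ts (Suc j') - fbs F ts j'"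
      unfolding direct_anc_def by blast
    with new_atom_step_unique[OF assms] step(1) show ?thesis
      unfolding trigger_Anc_def Anc_def by auto
  qed
qed

context
  fixes Rs :: "('p, 'c, 'x) rule set" and F :: "('p, 'c, 'v, 'x) fatom set"
    and ts :: "('p, 'c, 'v, 'x) trigger list" and b :: nat
  assumes rules: "\<forall>R\<in>Rs. wf_rule R \<and> card (body R) \<le> b"
    and derivation: "derivation Rs F ts"
begin

lemma finite_body_img_derivation: "j < length ts \<Longrightarrow> finite (body_img (ts ! j))"
  using finite_body_img rules derivation_rule_in[OF derivation] by blast

lemma finite_Anc: "finite (Anc F ts A)"
  by (rule finite_subset[OF Anc_subset_body_imgs]) (simp add: finite_body_img_derivation)

lemma finite_trigger_Anc: "j < length ts \<Longrightarrow> finite (trigger_Anc F ts j)"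
  unfolding trigger_Anc_def by (simp add: finite_Anc finite_body_img_derivation)

lemma card_initial_trigger_Anc_le:
  assumes j: "j < length ts"
    and stage_bound: "\<And>A. A \<in> fbs F ts j \<Longrightarrow>
                        card (F \<inter> insert A (Anc F ts A)) \<le> b ^ arank F ts j A"
  shows "card (F \<inter> trigger_Anc F ts j) \<le> b ^ trank F ts j (ts ! j)"
proof -
  have body_bound: "card (F \<inter> insert A (Anc F ts A)) \<le> b ^ arank F ts j A"
    if "A \<in> body_img (ts ! j)" for A
    by (rule stage_bound[OF subsetD[OF derivation_body_img_subset[OF derivation j] that]])
  have wf: "wf_rule (fst (ts ! j))" and card_body: "card (body (fst (ts ! j))) \<le> b"
    using rules derivation_rule_in[OF derivation j] by auto
  have "F \<inter> trigger_Anc F ts j = (\<Union>A\<in>body_img (ts ! j). F \<inter> insert A (Anc F ts A))"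
    unfolding trigger_Anc_def by blast
  also have "card \<dots> \<le> b ^ trank F ts j (ts ! j)"
    unfolding trank_def
    by (rule card_UN_le_power_Suc_Max[OF finite_body_img[OF wf]
          le_trans[OF card_body_img_le[OF wf] card_body] body_bound])
  finally show ?thesis .
qed

lemma card_initial_Anc_le:
  assumes "n \<le> length ts" "A \<in> fbs F ts n"
  shows "card (F \<inter> insert A (Anc F ts A)) \<le> b ^ arank F ts n A"
  using assms
proof (induction n arbitrary: A)
  case 0
  then show ?case using Anc_initial[of A] by simp
next
  case (Suc j)
  then have j: "j < length ts" by simp
  show ?case
  proof (cases "A \<in> fbs F ts j")
    case True
    then show ?thesis using Suc by simp
  next
    case False
    then have new: "A \<in> fbs F ts (Suc j) - fbs F ts j" using Suc.prems by simp
    then have "A \<notin> F" using subset_fbs by blast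
    then have "F \<inter> insert A (Anc F ts A) \<subseteq> F \<inter> trigger_Anc F ts j"
      using Anc_new_atom_subset[OF new] by blast
    then have "card (F \<inter> insert A (Anc F ts A)) \<le> card (F \<inter> trigger_Anc F ts j)"
      using finite_trigger_Anc[OF j] by (simp add: card_mono)
    also have "\<dots> \<le> b ^ trank F ts j (ts ! j)"
      by (rule card_initial_trigger_Anc_le[OF j Suc.IH[OF less_imp_le[OF j]]])
    finally show ?thesis unfolding arank_new_atom[OF new] .
  qed
qed

end

theorem lemma1:
  fixes Rs :: "('p, 'c, 'x) rule set"
    and F :: "('p, 'c, 'v, 'x) fatom set"
    and ts :: "('p, 'c, 'v, 'x) trigger list"
    and b :: nat and X :: chase_kind
  assumes rules: "\<forall>R\<in>Rs. wf_rule R \<and> card (body R) \<le> b"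
    and chase: "chase_derivation X Rs F ts"
  shows "(\<forall>A\<in>fbs F ts (length ts).
            card (F \<inter> Anc F ts A) \<le> b ^ arank F ts (length ts) A)
       \<and> (\<forall>j < length ts.
            card (F \<inter> trigger_Anc F ts j) \<le> b ^ trank F ts j (ts ! j))"
proof -
  have derivation: "derivation Rs F ts" using chase unfolding chase_derivation_def by simp
  note card_initial_Anc_le = card_initial_Anc_le[OF rules derivation]
  have "card (F \<inter> Anc F ts A) \<le> b ^ arank F ts (length ts) A" if "A \<in> fbs F ts (length ts)" for A
  proof -
    have "card (F \<inter> Anc F ts A) \<le> card (F \<inter> insert A (Anc F ts A))"
      by (rule card_mono) (auto simp: finite_Anc[OF rules derivation])
    then show ?thesis using card_initial_Anc_le[OF le_refl that] by (rule le_trans)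
  qed
  moreover have "card (F \<inter> trigger_Anc F ts j) \<le> b ^ trank F ts j (ts ! j)" if "j < length ts" for j
    by (rule card_initial_trigger_Anc_le[OF rules derivation that
          card_initial_Anc_le[OF less_imp_le[OF that]]])
  ultimately show ?thesis by blast
qed

end
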